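(* Let $K$ be a compact metric space and $f:K\to\mathbb{C}$ a bounded function. Then $f\in D(K)$ if and only if $\mathrm{osc}_\alpha f$ is a bounded function for every countable ordinal $\alpha<\omega_1$. When this occurs, there is a countable ordinal $\alpha$ with $\mathrm{osc}_\alpha f=\mathrm{osc}_{\alpha+1}f$. If moreover $f$ is real valued, then setting $\lambda=\||f|+\mathrm{osc}_\alpha f\|_\infty$ we have $\|f\|_D=\lambda$, and the functions $u=(\lambda-\mathrm{osc}_\alpha f+f)/2$ and $v=(\lambda-\mathrm{osc}_\alpha f-f)/2$ are non-negative lower semi-continuous functions with $f=u-v$ and $\|f\|_D=\|u+v\|_\infty$.
   Context: $C(K)$ denotes the continuous complex functions on $K$. $D(K)$ is the set of $f:K\to\mathbb{C}$ such that $f=\sum_j\varphi_j$ pointwise for some sequence $(\varphi_j)$ in $C(K)$ with $\sup_{k\in K}\sum_j|\varphi_j(k)|<\infty$ (equivalently, $f$ is a complex combination of differences of bounded lower semi-continuous functions), normed by $\|f\|_D=\inf\{\sup_{k\in K}\sum_j|\varphi_j(k)| : (\varphi_j)\subset C(K),\ \sum_j\varphi_j=f\}$. For $g:K\to[-\infty,\infty]$, $Ug(x)=\limsup_{y\to x}g(y)$, where limsups are non-exclusive: $\limsup_{y\to x}g(y)=\inf_U\sup g(U)$ over open neighborhoods $U$ of $x$. Transfinite oscillations of $f:K\to\mathbb{C}$: $\mathrm{osc}_0f\equiv0$; if $\beta=\alpha+1$, $\widetilde{\mathrm{osc}}_\beta f(x)=\limsup_{y\to x}(|f(y)-f(x)|+\mathrm{osc}_\alpha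 f(y))$; if $\beta$ is a limit ordinal, $\widetilde{\mathrm{osc}}_\beta f=\sup_{\alpha<\beta}\mathrm{osc}_\alpha f$; and $\mathrm{osc}_\beta f=U\widetilde{\mathrm{osc}}_\beta f$. *)

theory Defs
  imports "HOL-Analysis.Analysis" "HOL-Library.Extended_Nonnegative_Real"
begin

text \<open>Its field elements are the
  countable ordinals, each element standing for the order type of its initial segment.\<close>
definition omega1 :: "nat set rel" where
  "omega1 = cardSuc natLeq"

definition ord_less :: "nat set rel" where
  "ord_less = omega1 - Id"

definition is_succ_ord :: "nat set \<Rightarrow> nat set \<Rightarrow> bool" where
  "is_succ_ord \<alpha> \<beta> \<longleftrightarrow> (\<alpha>, \<beta>) \<in> ord_less \<and> (\<forall>\<gamma>. (\<alpha>, \<gamma>) \<in> ord_less \<longrightarrow> (\<beta>, \<gamma>) \<in> omega1)"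

text \<open>Non-exclusive limsup relative to K: inf over open neighbourhoods V of x of sup g (V \<inter> K).\<close>
definition lsup :: "'a::metric_space set \<Rightarrow> ('a \<Rightarrow> ennreal) \<Rightarrow> 'a \<Rightarrow> ennreal" where
  "lsup K g x = (INF V \<in> {V. open V \<and> x \<in> V}. SUP y \<in> V \<inter> K. g y)"

definition osc_step :: "'a::metric_space set \<Rightarrow> ('a \<Rightarrow> complex)
    \<Rightarrow> (nat set \<Rightarrow> 'a \<Rightarrow> ennreal) \<Rightarrow> nat set \<Rightarrow> 'a \<Rightarrow> ennreal" where
  "osc_step K f h i =
     (let P = {j. (j, i) \<in> ord_less} in
      if P = {} then (\<lambda>x. 0)
      else if (\<exists>j\<in>P. \<forall>k\<in>P. (k, j) \<in> omega1) then
        (let j = (THE j. j \<in> P \<and> (\<forall>k\<in>P. (k, j) \<in> omega1)) in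
         lsup K (\<lambda>x. lsup K (\<lambda>y. ennreal (norm (f y - f x)) + h j y) x))
      else lsup K (\<lambda>x. SUP j\<in>P. h j x))"

definition osc :: "'a::metric_space set \<Rightarrow> ('a \<Rightarrow> complex) \<Rightarrow> nat set \<Rightarrow> 'a \<Rightarrow> ennreal" where
  "osc K f = wfrec ord_less (osc_step K f)"

definition D_rep :: "'a::metric_space set \<Rightarrow> ('a \<Rightarrow> complex) \<Rightarrow> (nat \<Rightarrow> 'a \<Rightarrow> complex) \<Rightarrow> bool" where
  "D_rep K f \<phi> \<longleftrightarrow> (\<forall>j. continuous_on K (\<phi> j)) \<and> (\<forall>x\<in>K. (\<lambda>j. \<phi> j x) sums f x)
     \<and> (SUP x\<in>K. \<Sum>j. ennreal (norm (\<phi> j x))) < \<infinity>"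

definition in_D :: "'a::metric_space set \<Rightarrow> ('a \<Rightarrow> complex) \<Rightarrow> bool" where
  "in_D K f \<longleftrightarrow> (\<exists>\<phi>. D_rep K f \<phi>)"

definition D_norm :: "'a::metric_space set \<Rightarrow> ('a \<Rightarrow> complex) \<Rightarrow> ennreal" where
  "D_norm K f = (INF \<phi> \<in> {\<phi>. D_rep K f \<phi>}. SUP x\<in>K. \<Sum>j. ennreal (norm (\<phi> j x)))"

definition lsc_on :: "'a::metric_space set \<Rightarrow> ('a \<Rightarrow> real) \<Rightarrow> bool" where
  "lsc_on K g \<longleftrightarrow> (\<forall>t. openin (top_of_set K) {x\<in>K. t < g x})"

end

theory Submission
  imports Defs
begin

(* The oscillations osc_alpha f increase with alpha and are upper semicontinuous; on a compact
   metric space such a chain of length omega_1 must stabilise at some countable successor stage,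
   osc_alpha f = osc_(alpha+1) f.  If f = sum_j phi_j with sum_j |phi_j| <= M, transfinite
   induction gives osc_alpha f <= M - sum_j |phi_j|, hence |f| + osc_alpha f <= ||f||_D.
   Conversely, at a stable stage, with lambda = || |f| + osc_alpha f ||_oo, the functions
   (lambda - osc_alpha f + g) / 2 for g = +-Re f, +-Im f are non-negative and lower semicontinuous,
   so by Baire they are sums of non-negative continuous functions; their differences represent f
   in D(K), with norm exactly lambda when f is real. *)

lemma wo_rel_omega1: "wo_rel omega1"
  unfolding omega1_def wo_rel_def by (rule cardSuc_Well_order[OF natLeq_Card_order])

lemma Card_order_omega1: "Card_order omega1"
  unfolding omega1_def by (rule cardSuc_Card_order[OF natLeq_Card_order])

lemma wf_ord_less: "wf ord_less"
  unfolding ord_less_def by (rule wo_rel.WF[OF wo_rel_omega1])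

lemma omega1_antisym: "(a, b) \<in> omega1 \<Longrightarrow> (b, a) \<in> omega1 \<Longrightarrow> a = b"
  using wo_rel.ANTISYM[OF wo_rel_omega1] unfolding antisym_def by blast

lemma omega1_total: "a \<in> Field omega1 \<Longrightarrow> b \<in> Field omega1 \<Longrightarrow> (a, b) \<in> omega1 \<or> (b, a) \<in> omega1"
  using wo_rel.TOTALS[OF wo_rel_omega1] by blast

lemma ord_less_iff: "(a, b) \<in> ord_less \<longleftrightarrow> (a, b) \<in> omega1 \<and> a \<noteq> b"
  unfolding ord_less_def by auto

lemma ord_less_Field: "(a, b) \<in> ord_less \<Longrightarrow> a \<in> Field omega1"
  unfolding ord_less_iff by (blast intro: FieldI1)

lemma uncountable_Field_omega1: "\<not> countable (Field omega1)"
  including cardinal_syntax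
proof
  assume "countable (Field omega1)"
  then have "|Field omega1| \<le>o |UNIV :: nat set|"
    unfolding countable_def card_of_ordLeq[symmetric] by auto
  then have "|Field omega1| \<le>o natLeq"
    using card_of_nat ordLeq_ordIso_trans by blast
  then have "omega1 \<le>o natLeq"
    using card_of_Field_ordIso[OF Card_order_omega1] ordIso_ordLeq_trans ordIso_symmetric by blast
  moreover have "natLeq <o omega1"
    unfolding omega1_def by (rule cardSuc_greater[OF natLeq_Card_order])
  ultimately show False using not_ordLess_ordLeq by blast
qed

lemma ord_less_unbounded: "a \<in> Field omega1 \<Longrightarrow> \<exists>b. (a, b) \<in> ord_less"
proof -
  assume "a \<in> Field omega1"
  moreover have "\<not> finite (Field omega1)"
    using uncountable_Field_omega1 countable_finite by blast
  ultimately show ?thesis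
    using infinite_Card_order_limit[OF Card_order_omega1] unfolding ord_less_iff by blast
qed

lemma omega1_least: "A \<subseteq> Field omega1 \<Longrightarrow> A \<noteq> {} \<Longrightarrow> \<exists>a\<in>A. \<forall>b\<in>A. (a, b) \<in> omega1"
  using Linear_order_wf_diff_Id[of omega1] wo_rel_omega1
  unfolding wo_rel_def well_order_on_def by blast

lemma is_succ_ord_exists: "a \<in> Field omega1 \<Longrightarrow> \<exists>b. is_succ_ord a b"
proof -
  assume "a \<in> Field omega1"
  then have "{b. (a, b) \<in> ord_less} \<noteq> {}" using ord_less_unbounded by blast
  moreover have "{b. (a, b) \<in> ord_less} \<subseteq> Field omega1"
    unfolding ord_less_iff by (blast intro: FieldI2)
  ultimately obtain b where "(a, b) \<in> ord_less" "\<forall>c. (a, c) \<in> ord_less \<longrightarrow> (b, c) \<in> omega1"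
    using omega1_least[of "{b. (a, b) \<in> ord_less}"] by auto
  then show ?thesis unfolding is_succ_ord_def by blast
qed

lemma is_succ_ord_less: "is_succ_ord a b \<Longrightarrow> (a, b) \<in> ord_less"
  unfolding is_succ_ord_def by blast

lemma is_succ_ord_least: "is_succ_ord a b \<Longrightarrow> (a, c) \<in> ord_less \<Longrightarrow> (b, c) \<in> omega1"
  unfolding is_succ_ord_def by blast

lemma is_succ_ord_pred:
  assumes "is_succ_ord a b" and "(j, b) \<in> ord_less"
  shows "(j, a) \<in> omega1"
proof (rule ccontr)
  assume "(j, a) \<notin> omega1"
  then have "(a, j) \<in> ord_less"
    using omega1_total[OF ord_less_Field[OF is_succ_ord_less[OF assms(1)]] ord_less_Field[OF assms(2)]]
    unfolding ord_less_iff by blast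
  then have "(b, j) \<in> omega1" using is_succ_ord_least[OF assms(1)] by blast
  then show False using assms(2) omega1_antisym unfolding ord_less_iff by blast
qed

lemma inj_on_Field_omega1I:
  assumes "\<And>a b. (a, b) \<in> ord_less \<Longrightarrow> b \<in> Field omega1 \<Longrightarrow> g a \<noteq> g b"
  shows "inj_on g (Field omega1)"
proof (rule inj_onI, rule ccontr)
  fix a b assume ab: "a \<in> Field omega1" "b \<in> Field omega1" "g a = g b" "a \<noteq> b"
  then have "(a, b) \<in> ord_less \<or> (b, a) \<in> ord_less"
    using omega1_total[OF ab(1,2)] unfolding ord_less_iff by blast
  then show False using assms[of a b] assms[of b a] ab(1-3) by (cases "(a, b) \<in> ord_less") simp_all
qed

lemma the_max_pred:
  assumes "(m, i) \<in> ord_less" and "\<And>k. (k, i) \<in> ord_less \<Longrightarrow> (k, m) \<in> omega1"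
  shows "(THE j. j \<in> {j. (j, i) \<in> ord_less} \<and> (\<forall>k\<in>{j. (j, i) \<in> ord_less}. (k, j) \<in> omega1)) = m"
proof (rule the_equality)
  fix j assume "j \<in> {j. (j, i) \<in> ord_less} \<and> (\<forall>k\<in>{j. (j, i) \<in> ord_less}. (k, j) \<in> omega1)"
  then have "(j, m) \<in> omega1" and "(m, j) \<in> omega1" using assms by auto
  then show "j = m" by (rule omega1_antisym)
qed (use assms in blast)

lemma osc_step_zero: "{j. (j, i) \<in> ord_less} = {} \<Longrightarrow> osc_step K f h i = (\<lambda>x. 0)"
  unfolding osc_step_def Let_def by (simp only: if_P)

lemma osc_step_max_pred:
  assumes "(m, i) \<in> ord_less" and "\<And>k. (k, i) \<in> ord_less \<Longrightarrow> (k, m) \<in> omega1"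
  shows "osc_step K f h i = lsup K (\<lambda>x. lsup K (\<lambda>y. ennreal (norm (f y - f x)) + h m y) x)"
proof -
  have "{j. (j, i) \<in> ord_less} \<noteq> {}"
    and "\<exists>j\<in>{j. (j, i) \<in> ord_less}. \<forall>k\<in>{j. (j, i) \<in> ord_less}. (k, j) \<in> omega1"
    using assms by blast+
  then show ?thesis
    unfolding osc_step_def Let_def by (simp only: if_not_P if_P if_False the_max_pred[OF assms])
qed

lemma osc_step_limit:
  assumes "{j. (j, i) \<in> ord_less} \<noteq> {}"
    and "\<not> (\<exists>j\<in>{j. (j, i) \<in> ord_less}. \<forall>k\<in>{j. (j, i) \<in> ord_less}. (k, j) \<in> omega1)"
  shows "osc_step K f h i = lsup K (\<lambda>x. SUP j\<in>{j. (j, i) \<in> ord_less}. h j x)"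
  unfolding osc_step_def Let_def by (simp only: if_not_P[OF assms(1)] if_not_P[OF assms(2)])

lemma osc_step_cases:
  obtains (zero) "\<And>j. (j, i) \<notin> ord_less"
    "\<And>h. osc_step K f h i = (\<lambda>x. 0)"
  | (succ) m where "(m, i) \<in> ord_less" "\<And>k. (k, i) \<in> ord_less \<Longrightarrow> (k, m) \<in> omega1"
    "\<And>h. osc_step K f h i = lsup K (\<lambda>x. lsup K (\<lambda>y. ennreal (norm (f y - f x)) + h m y) x)"
  | (limit) "\<And>h. osc_step K f h i = lsup K (\<lambda>x. SUP j\<in>{j. (j, i) \<in> ord_less}. h j x)"
proof -
  let ?P = "{j. (j, i) \<in> ord_less}"
  consider "?P = {}" | m where "m \<in> ?P" "\<forall>k\<in>?P. (k, m) \<in> omega1"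
    | "?P \<noteq> {}" "\<not> (\<exists>m\<in>?P. \<forall>k\<in>?P. (k, m) \<in> omega1)"
    by blast
  then show ?thesis
  proof cases
    case 1
    then show ?thesis using zero osc_step_zero by blast
  next
    case (2 m)
    then show ?thesis using succ osc_step_max_pred[of m i] by blast
  next
    case 3
    then show ?thesis using limit osc_step_limit by blast
  qed
qed

lemma osc_step_cong:
  assumes "\<And>j. (j, i) \<in> ord_less \<Longrightarrow> h j = h' j"
  shows "osc_step K f h i = osc_step K f h' i"
proof (cases K f i rule: osc_step_cases)
  case (succ m)
  then show ?thesis using assms by simp
next
  case limit
  then show ?thesis using assms by simp
qed simp

lemma osc_unfold: "osc K f i = osc_step K f (osc K f) i"
proof -
  have "osc K f i = osc_step K f (cut (osc K f) ord_less i) i"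
    unfolding osc_def by (rule wfrec[OF wf_ord_less])
  also have "\<dots> = osc_step K f (osc K f) i"
    by (rule osc_step_cong) (simp add: cut_apply)
  finally show ?thesis .
qed

lemma osc_cases:
  obtains (zero) "\<And>j. (j, i) \<notin> ord_less" "osc K f i = (\<lambda>x. 0)"
    | (succ) m where "(m, i) \<in> ord_less" "\<And>k. (k, i) \<in> ord_less \<Longrightarrow> (k, m) \<in> omega1"
        "osc K f i = lsup K (\<lambda>x. lsup K (\<lambda>y. ennreal (norm (f y - f x)) + osc K f m y) x)"
    | (limit) "osc K f i = lsup K (\<lambda>x. SUP j\<in>{j. (j, i) \<in> ord_less}. osc K f j x)"
proof (cases K f i rule: osc_step_cases)
  case zero
  then show ?thesis by (intro that(1)) (simp_all add: osc_unfold[of K f i])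
next
  case (succ m)
  then show ?thesis by (intro that(2)) (simp_all add: osc_unfold[of K f i])
next
  case limit
  then show ?thesis by (intro that(3)) (simp add: osc_unfold[of K f i])
qed

lemma osc_succ:
  "is_succ_ord a b \<Longrightarrow> osc K f b = lsup K (\<lambda>x. lsup K (\<lambda>y. ennreal (norm (f y - f x)) + osc K f a y) x)"
  unfolding osc_unfold[of K f b]
  by (rule osc_step_max_pred) (auto intro: is_succ_ord_less is_succ_ord_pred)

lemma lsup_upper: "x \<in> K \<Longrightarrow> g x \<le> lsup K g x"
  unfolding lsup_def by (rule INF_greatest) (auto intro: SUP_upper)

lemma lsup_le_SUP: "open V \<Longrightarrow> x \<in> V \<Longrightarrow> lsup K g x \<le> (SUP y\<in>V \<inter> K. g y)"
  unfolding lsup_def by (rule INF_lower) auto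

lemma lsup_mono: "(\<And>y. y \<in> K \<Longrightarrow> g y \<le> h y) \<Longrightarrow> lsup K g x \<le> lsup K h x"
  unfolding lsup_def by (intro INF_mono) (auto intro!: SUP_mono)

lemma lsup_le_ennrealI:
  assumes "c \<ge> 0"
    and "\<And>e. e > 0 \<Longrightarrow> \<exists>V. open V \<and> x \<in> V \<and> (\<forall>y\<in>V \<inter> K. g y \<le> ennreal (c + e))"
  shows "lsup K g x \<le> ennreal c"
proof (rule ennreal_le_epsilon)
  fix e :: real assume "0 < e"
  then obtain V where V: "open V" "x \<in> V" "\<forall>y\<in>V \<inter> K. g y \<le> ennreal (c + e)"
    using assms(2) by blast
  have "lsup K g x \<le> (SUP y\<in>V \<inter> K. g y)" by (rule lsup_le_SUP[OF V(1,2)])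
  also have "\<dots> \<le> ennreal (c + e)" using V(3) by (intro SUP_least) auto
  finally show "lsup K g x \<le> ennreal c + ennreal e" using \<open>0 < e\<close> assms(1) by simp
qed

lemma lsup_less_imp_open:
  assumes "lsup K g x < t"
  obtains V where "open V" "x \<in> V" "\<forall>y\<in>V \<inter> K. g y < t" "\<forall>y\<in>V. lsup K g y < t"
proof -
  obtain V where V: "open V" "x \<in> V" "(SUP y\<in>V \<inter> K. g y) < t"
    using assms unfolding lsup_def INF_less_iff by blast
  show ?thesis
  proof
    show "\<forall>y\<in>V \<inter> K. g y < t" using V(3) SUP_upper[of _ "V \<inter> K" g] by (blast intro: le_less_trans)
    show "\<forall>y\<in>V. lsup K g y < t" using V lsup_le_SUP[OF V(1)] by (auto intro: le_less_trans)
  qed (use V in auto)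
qed

lemma osc_mono_less: "(j, i) \<in> ord_less \<Longrightarrow> x \<in> K \<Longrightarrow> osc K f j x \<le> osc K f i x"
proof (induction i arbitrary: j rule: wf_induct_rule[OF wf_ord_less])
  case (1 i)
  show ?case
  proof (cases K f i rule: osc_cases)
    case zero
    then show ?thesis using "1.prems" by blast
  next
    case (succ m)
    have "osc K f j x \<le> osc K f m x"
      using "1.IH"[OF succ(1)] succ(2)[OF "1.prems"(1)] "1.prems"(2)
      by (cases "j = m") (auto simp: ord_less_iff)
    also have "\<dots> = ennreal (norm (f x - f x)) + osc K f m x" by simp
    also have "\<dots> \<le> lsup K (\<lambda>y. ennreal (norm (f y - f x)) + osc K f m y) x"
      by (rule lsup_upper[OF "1.prems"(2)])
    also have "\<dots> \<le> osc K f i x"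
      unfolding succ(3) by (rule lsup_upper[OF "1.prems"(2)])
    finally show ?thesis .
  next
    case limit
    have "osc K f j x \<le> (SUP j\<in>{j. (j, i) \<in> ord_less}. osc K f j x)"
      using "1.prems"(1) by (intro SUP_upper) simp
    also have "\<dots> \<le> osc K f i x"
      unfolding limit by (rule lsup_upper[OF "1.prems"(2)])
    finally show ?thesis .
  qed
qed

lemma osc_mono: "(j, i) \<in> omega1 \<Longrightarrow> x \<in> K \<Longrightarrow> osc K f j x \<le> osc K f i x"
  by (cases "j = i") (auto simp: ord_less_iff intro: osc_mono_less)

lemma osc_less_imp_open:
  assumes "osc K f i x < t"
  shows "\<exists>V. open V \<and> x \<in> V \<and> (\<forall>y\<in>V. osc K f i y < t)"
proof (cases K f i rule: osc_cases)
  case zero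
  then show ?thesis using assms by (intro exI[of _ UNIV]) auto
next
  case (succ m)
  show ?thesis
    using assms unfolding succ(3) by (elim lsup_less_imp_open) blast
next
  case limit
  show ?thesis
    using assms unfolding limit by (elim lsup_less_imp_open) blast
qed

locale D_representation =
  fixes K :: "'a::metric_space set" and f :: "'a \<Rightarrow> complex" and \<phi> :: "nat \<Rightarrow> 'a \<Rightarrow> complex"
  assumes D_rep: "D_rep K f \<phi>"
begin

definition abs_sum :: "'a \<Rightarrow> real" where
  "abs_sum x = (\<Sum>j. norm (\<phi> j x))"

definition sup_abs_sum :: real where
  "sup_abs_sum = enn2real (SUP x\<in>K. \<Sum>j. ennreal (norm (\<phi> j x)))"

lemma continuous_on_term: "continuous_on K (\<phi> j)"
  using D_rep unfolding D_rep_def by blast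

lemma sums_f: "x \<in> K \<Longrightarrow> (\<lambda>j. \<phi> j x) sums f x"
  using D_rep unfolding D_rep_def by blast

lemma SUP_eq_sup_abs_sum: "(SUP x\<in>K. \<Sum>j. ennreal (norm (\<phi> j x))) = ennreal sup_abs_sum"
  using D_rep unfolding D_rep_def sup_abs_sum_def by (cases "SUP x\<in>K. \<Sum>j. ennreal (norm (\<phi> j x))") auto

lemma sup_abs_sum_nonneg: "0 \<le> sup_abs_sum"
  unfolding sup_abs_sum_def by simp

lemma summable_norm_terms: "x \<in> K \<Longrightarrow> summable (\<lambda>j. norm (\<phi> j x))"
proof -
  assume "x \<in> K"
  then have "(\<Sum>j. ennreal (norm (\<phi> j x))) \<le> ennreal sup_abs_sum"
    unfolding SUP_eq_sup_abs_sum[symmetric] by (rule SUP_upper)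
  then show ?thesis
    by (intro summable_suminf_not_top) (auto simp: top_unique)
qed

lemma abs_sum_le_sup: "x \<in> K \<Longrightarrow> abs_sum x \<le> sup_abs_sum"
proof -
  assume x: "x \<in> K"
  have "ennreal (abs_sum x) = (\<Sum>j. ennreal (norm (\<phi> j x)))"
    unfolding abs_sum_def using summable_norm_terms[OF x] by (intro suminf_ennreal2[symmetric]) auto
  also have "\<dots> \<le> ennreal sup_abs_sum"
    unfolding SUP_eq_sup_abs_sum[symmetric] using x by (rule SUP_upper)
  finally show ?thesis using ennreal_le_iff[OF sup_abs_sum_nonneg] by blast
qed

lemma abs_sum_nonneg: "x \<in> K \<Longrightarrow> 0 \<le> abs_sum x"
  unfolding abs_sum_def by (intro suminf_nonneg summable_norm_terms) auto

lemma norm_le_abs_sum: "x \<in> K \<Longrightarrow> norm (f x) \<le> abs_sum x"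
  unfolding abs_sum_def using sums_f summable_norm_terms
  by (metis summable_norm sums_unique)

lemma norm_tail_le:
  assumes "y \<in> K"
  shows "norm (f y - (\<Sum>j<N. \<phi> j y)) \<le> abs_sum y - (\<Sum>j<N. norm (\<phi> j y))"
proof -
  have summable: "summable (\<lambda>j. norm (\<phi> j y))" by (rule summable_norm_terms[OF assms])
  have "(\<Sum>j. \<phi> (j + N) y) + (\<Sum>j<N. \<phi> j y) = f y"
    using suminf_split_initial_segment[OF summable_norm_cancel[OF summable], of N] sums_f[OF assms]
    by (simp add: sums_iff)
  then have "f y - (\<Sum>j<N. \<phi> j y) = (\<Sum>j. \<phi> (j + N) y)"
    by (metis add_diff_cancel_right')
  also have "norm \<dots> \<le> (\<Sum>j. norm (\<phi> (j + N) y))"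
    by (rule summable_norm) (rule summable_ignore_initial_segment[OF summable])
  also have "\<dots> = abs_sum y - (\<Sum>j<N. norm (\<phi> j y))"
    unfolding abs_sum_def using suminf_split_initial_segment[OF summable, of N] by simp
  finally show ?thesis .
qed

text \<open>Choose a partial sum that captures \<open>abs_sum x\<close> up to \<open>e\<close>: it is continuous, so it moves
  little near \<open>x\<close>, and both tails are controlled by the tails of \<open>abs_sum\<close>.\<close>
lemma increment_le_abs_sum_increment:
  assumes x: "x \<in> K" and e: "e > 0"
  shows "\<exists>V. open V \<and> x \<in> V \<and> (\<forall>y\<in>V \<inter> K. norm (f y - f x) \<le> abs_sum y - abs_sum x + e)"
proof -
  define A where "A N y = (\<Sum>j<N. norm (\<phi> j y))" for N y
  define S where "S N y = (\<Sum>j<N. \<phi> j y)" for N y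
  have "(\<lambda>N. A N x) \<longlonglongrightarrow> abs_sum x"
    unfolding A_def abs_sum_def using summable_norm_terms[OF x] by (rule summable_LIMSEQ)
  then obtain N where "\<forall>n\<ge>N. norm (A n x - abs_sum x) < e/4"
    using LIMSEQ_D[of _ "abs_sum x" "e/4"] e by auto
  then have "\<bar>A N x - abs_sum x\<bar> < e/4" by simp
  then have N: "abs_sum x - A N x < e/4" by linarith
  have "continuous_on K (A N)" "continuous_on K (S N)"
    unfolding A_def S_def by (intro continuous_intros continuous_on_term)+
  then have "\<forall>\<^sub>F y in at x within K. dist (A N y) (A N x) < e/4 \<and> dist (S N y) (S N x) < e/4"
    using x e unfolding continuous_on_def by (intro eventually_conj tendstoD) auto
  then obtain d where d: "d > 0"
    "\<forall>y\<in>K. y \<noteq> x \<and> dist y x < d \<longrightarrow> dist (A N y) (A N x) < e/4 \<and> dist (S N y) (S N x) < e/4"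
    unfolding eventually_at by blast
  have "norm (f y - f x) \<le> abs_sum y - abs_sum x + e" if y: "y \<in> ball x d \<inter> K" for y
  proof -
    from y d e have close: "\<bar>A N y - A N x\<bar> < e/4" "norm (S N y - S N x) < e/4"
      by (cases "y = x"; force simp: dist_commute dist_norm)+
    have "f y - f x = (S N y - S N x) + (f y - S N y) - (f x - S N x)" by simp
    then have "norm (f y - f x) \<le> norm (S N y - S N x) + norm (f y - S N y) + norm (f x - S N x)"
      by (metis norm_triangle_ineq norm_triangle_ineq4 add_right_mono order_trans)
    also have "\<dots> \<le> e/4 + (abs_sum y - A N y) + (abs_sum x - A N x)"
      using close(2) norm_tail_le[of y N] norm_tail_le[OF x, of N] y
      unfolding A_def S_def by (intro add_mono) auto
    finally show ?thesis using close(1) N by linarith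
  qed
  then show ?thesis using d(1) by (intro exI[of _ "ball x d"]) auto
qed

lemma lsup_increment_le:
  assumes g: "\<And>y. y \<in> K \<Longrightarrow> g y \<le> ennreal (sup_abs_sum - abs_sum y)" and x: "x \<in> K"
  shows "lsup K (\<lambda>y. ennreal (norm (f y - f x)) + g y) x \<le> ennreal (sup_abs_sum - abs_sum x)"
proof (rule lsup_le_ennrealI)
  show "0 \<le> sup_abs_sum - abs_sum x" using abs_sum_le_sup[OF x] by simp
  fix e :: real assume "e > 0"
  then obtain V where V: "open V" "x \<in> V" "\<forall>y\<in>V \<inter> K. norm (f y - f x) \<le> abs_sum y - abs_sum x + e"
    using increment_le_abs_sum_increment[OF x] by blast
  have "ennreal (norm (f y - f x)) + g y \<le> ennreal (sup_abs_sum - abs_sum x + e)" if y: "y \<in> V \<inter> K" for y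
  proof -
    have "ennreal (norm (f y - f x)) + g y \<le> ennreal (abs_sum y - abs_sum x + e) + ennreal (sup_abs_sum - abs_sum y)"
      using V(3) g y by (intro add_mono ennreal_leI) auto
    also have "\<dots> = ennreal (sup_abs_sum - abs_sum x + e)"
    proof -
      have "0 \<le> abs_sum y - abs_sum x + e" using V(3) y norm_ge_zero order_trans by blast
      then show ?thesis
        using abs_sum_le_sup[of y] y by (subst ennreal_plus[symmetric]) (auto simp: algebra_simps)
    qed
    finally show ?thesis .
  qed
  then show "\<exists>V. open V \<and> x \<in> V \<and> (\<forall>y\<in>V \<inter> K. ennreal (norm (f y - f x)) + g y \<le> ennreal (sup_abs_sum - abs_sum x + e))"
    using V(1,2) by blast
qed

lemma lsup_le:
  assumes "\<And>y. y \<in> K \<Longrightarrow> g y \<le> ennreal (sup_abs_sum - abs_sum y)" and "x \<in> K"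
  shows "lsup K g x \<le> ennreal (sup_abs_sum - abs_sum x)"
  using lsup_mono[of K g "\<lambda>y. ennreal (norm (f y - f x)) + g y"] lsup_increment_le[OF assms]
  by (auto intro: order_trans add_increasing)

lemma osc_le: "x \<in> K \<Longrightarrow> osc K f i x \<le> ennreal (sup_abs_sum - abs_sum x)"
proof (induction i arbitrary: x rule: wf_induct_rule[OF wf_ord_less])
  case (1 i)
  show ?case
  proof (cases K f i rule: osc_cases)
    case zero
    then show ?thesis by simp
  next
    case (succ m)
    show ?thesis
      unfolding succ(3) using "1.IH"[OF succ(1)] "1.prems"
      by (intro lsup_le lsup_increment_le)
  next
    case limit
    show ?thesis
      unfolding limit using "1.IH" "1.prems" by (intro lsup_le) (auto intro: SUP_least)
  qed
qed

lemma norm_plus_osc_le: "x \<in> K \<Longrightarrow> ennreal (norm (f x)) + osc K f i x \<le> (SUP x\<in>K. \<Sum>j. ennreal (norm (\<phi> j x)))"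
proof -
  assume x: "x \<in> K"
  have "ennreal (norm (f x)) + osc K f i x \<le> ennreal (abs_sum x) + ennreal (sup_abs_sum - abs_sum x)"
    using norm_le_abs_sum[OF x] osc_le[OF x] by (intro add_mono ennreal_leI)
  also have "\<dots> = ennreal sup_abs_sum"
    using abs_sum_le_sup[OF x] abs_sum_nonneg[OF x] by (subst ennreal_plus[symmetric]) auto
  finally show ?thesis unfolding SUP_eq_sup_abs_sum .
qed

end

lemma SUP_norm_plus_osc_le_D_norm: "(SUP x\<in>K. ennreal (norm (f x)) + osc K f i x) \<le> D_norm K f"
  unfolding D_norm_def
  by (intro INF_greatest SUP_least) (auto intro: D_representation.norm_plus_osc_le D_representation.intro)

lemma D_norm_finite: "in_D K f \<Longrightarrow> D_norm K f < \<infinity>"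
proof -
  assume "in_D K f"
  then obtain \<phi> where \<phi>: "D_rep K f \<phi>" unfolding in_D_def by blast
  then have "D_norm K f \<le> (SUP x\<in>K. \<Sum>j. ennreal (norm (\<phi> j x)))"
    unfolding D_norm_def by (intro INF_lower) simp
  also have "\<dots> < \<infinity>" using \<phi> unfolding D_rep_def by blast
  finally show ?thesis .
qed

lemma in_D_imp_osc_bounded: "in_D K f \<Longrightarrow> (SUP x\<in>K. osc K f i x) < \<infinity>"
proof -
  assume "in_D K f"
  have "(SUP x\<in>K. osc K f i x) \<le> (SUP x\<in>K. ennreal (norm (f x)) + osc K f i x)"
    by (intro SUP_mono') (auto intro: add_increasing)
  also have "\<dots> \<le> D_norm K f" by (rule SUP_norm_plus_osc_le_D_norm)
  finally show ?thesis using D_norm_finite[OF \<open>in_D K f\<close>] by (rule le_less_trans)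
qed

lemma lsc_onI:
  assumes "\<And>x e. x \<in> K \<Longrightarrow> e > 0 \<Longrightarrow> \<exists>d>0. \<forall>y\<in>K. dist y x < d \<longrightarrow> u x - e < u y"
  shows "lsc_on K u"
  unfolding lsc_on_def openin_euclidean_subtopology_iff
proof (intro allI conjI ballI)
  fix t x assume x: "x \<in> {x \<in> K. t < u x}"
  then obtain d where "d > 0" "\<forall>y\<in>K. dist y x < d \<longrightarrow> u x - (u x - t) < u y"
    using assms[of x "u x - t"] by auto
  then show "\<exists>d>0. \<forall>y\<in>K. dist y x < d \<longrightarrow> y \<in> {x \<in> K. t < u x}" by auto
qed auto

lemma lsc_onD:
  assumes "lsc_on K u" "x \<in> K" "e > 0"
  shows "\<exists>d>0. \<forall>y\<in>K. dist y x < d \<longrightarrow> u x - e < u y"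
proof -
  have "openin (top_of_set K) {y \<in> K. u x - e < u y}" using assms(1) unfolding lsc_on_def by blast
  moreover have "x \<in> {y \<in> K. u x - e < u y}" using assms(2,3) by simp
  ultimately show ?thesis unfolding openin_euclidean_subtopology_iff by blast
qed

definition lipschitz_minorant :: "'a::metric_space set \<Rightarrow> ('a \<Rightarrow> real) \<Rightarrow> nat \<Rightarrow> 'a \<Rightarrow> real" where
  "lipschitz_minorant K u n x = (INF y\<in>K. u y + real n * dist x y)"

context
  fixes K :: "'a::metric_space set" and u :: "'a \<Rightarrow> real"
  assumes K: "K \<noteq> {}" and nonneg: "\<And>x. x \<in> K \<Longrightarrow> 0 \<le> u x"
begin

private lemma bdd_below_minorant: "bdd_below ((\<lambda>y. u y + real n * dist x y) ` K)"
  using nonneg by (intro bdd_belowI2[of _ 0]) auto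

lemma lipschitz_minorant_nonneg: "0 \<le> lipschitz_minorant K u n x"
  unfolding lipschitz_minorant_def using K nonneg by (intro cINF_greatest) auto

lemma lipschitz_minorant_le: "y \<in> K \<Longrightarrow> lipschitz_minorant K u n x \<le> u y + real n * dist x y"
  unfolding lipschitz_minorant_def by (rule cINF_lower[OF bdd_below_minorant])

lemma lipschitz_minorant_mono: "lipschitz_minorant K u n x \<le> lipschitz_minorant K u (Suc n) x"
  unfolding lipschitz_minorant_def[of K u "Suc n"]
proof (rule cINF_greatest[OF K])
  fix y assume "y \<in> K"
  then have "lipschitz_minorant K u n x \<le> u y + real n * dist x y" by (rule lipschitz_minorant_le)
  also have "\<dots> \<le> u y + real (Suc n) * dist x y" by (simp add: distrib_right)
  finally show "lipschitz_minorant K u n x \<le> u y + real (Suc n) * dist x y" .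
qed

lemma lipschitz_minorant_lipschitz: "(real n)-lipschitz_on UNIV (lipschitz_minorant K u n)"
proof (rule lipschitz_onI)
  fix x x' :: 'a
  have "lipschitz_minorant K u n x \<le> lipschitz_minorant K u n x' + real n * dist x x'" for x x'
  proof -
    have "lipschitz_minorant K u n x - real n * dist x x' \<le> u y + real n * dist x' y" if "y \<in> K" for y
      using lipschitz_minorant_le[OF that, of n x] dist_triangle[of x y x']
        mult_left_mono[of "dist x y" "dist x x' + dist x' y" "real n"]
      by (simp add: algebra_simps)
    then have "lipschitz_minorant K u n x - real n * dist x x' \<le> lipschitz_minorant K u n x'"
      unfolding lipschitz_minorant_def[of K u n x'] using K by (intro cINF_greatest) auto
    then show ?thesis by simp
  qed
  from this[of x x'] this[of x' x]
  show "dist (lipschitz_minorant K u n x) (lipschitz_minorant K u n x') \<le> real n * dist x x'"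
    by (simp add: dist_real_def dist_commute abs_le_iff)
qed simp

lemma lipschitz_minorant_LIMSEQ:
  assumes lsc: "lsc_on K u" and x: "x \<in> K"
  shows "(\<lambda>n. lipschitz_minorant K u n x) \<longlonglongrightarrow> u x"
proof (rule LIMSEQ_I)
  fix e :: real assume e: "0 < e"
  obtain d where d: "d > 0" "\<forall>y\<in>K. dist y x < d \<longrightarrow> u x - e / 2 < u y"
    using lsc_onD[OF lsc x, of "e / 2"] e by auto
  obtain N where N: "u x / d < real N" using reals_Archimedean2 by blast
  have lower: "u x - e < lipschitz_minorant K u n x" if n: "n \<ge> N" for n
  proof -
    have "u x - e / 2 \<le> u y + real n * dist x y" if y: "y \<in> K" for y
    proof (cases "dist y x < d")
      case True
      then show ?thesis using d(2) y by (smt (verit) mult_nonneg_nonneg of_nat_0_le_iff zero_le_dist)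
    next
      case False
      have "u x < real N * d" using N d(1) by (simp add: field_simps)
      also have "\<dots> \<le> real n * dist x y"
        using n False d(1) by (intro mult_mono) (auto simp: dist_commute)
      finally show ?thesis using nonneg[OF y] e by linarith
    qed
    then have "u x - e / 2 \<le> lipschitz_minorant K u n x"
      unfolding lipschitz_minorant_def using K by (intro cINF_greatest) auto
    then show ?thesis using e by linarith
  qed
  have upper: "lipschitz_minorant K u n x \<le> u x" for n
    using lipschitz_minorant_le[OF x, of n x] by simp
  have "norm (lipschitz_minorant K u n x - u x) < e" if "n \<ge> N" for n
    using lower[OF that] upper[of n] e unfolding real_norm_def by linarith
  then show "\<exists>N. \<forall>n\<ge>N. norm (lipschitz_minorant K u n x - u x) < e" by blast
qed

end

text \<open>Baire: a non-negative lower semi-continuous function is the increasing limit of its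
  Lipschitz minorants, so it is the sum of their non-negative continuous increments.\<close>
lemma lsc_on_sums_continuous:
  assumes lsc: "lsc_on K u" and nonneg: "\<And>x. x \<in> K \<Longrightarrow> 0 \<le> u x"
  obtains \<psi> where "\<And>n. continuous_on K (\<psi> n)" "\<And>n x. x \<in> K \<Longrightarrow> 0 \<le> \<psi> n x"
    "\<And>x. x \<in> K \<Longrightarrow> (\<lambda>n. \<psi> n x) sums u x"
proof (cases "K = {}")
  case False
  define G where "G n x = (case n of 0 \<Rightarrow> 0 | Suc m \<Rightarrow> lipschitz_minorant K u m x)" for n x
  show ?thesis
  proof
    fix n
    have "continuous_on K (lipschitz_minorant K u m)" for m
      using lipschitz_on_continuous_on[OF lipschitz_minorant_lipschitz[OF False nonneg]]
      by (rule continuous_on_subset[OF _ subset_UNIV])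
    then show "continuous_on K (\<lambda>x. G (Suc n) x - G n x)"
      unfolding G_def by (cases n) (auto intro: continuous_on_diff)
    fix x
    show "0 \<le> G (Suc n) x - G n x"
      unfolding G_def
      using lipschitz_minorant_nonneg[OF False nonneg] lipschitz_minorant_mono[OF False nonneg]
      by (cases n) auto
  next
    fix x assume x: "x \<in> K"
    have "(\<lambda>n. G (Suc n) x) \<longlonglongrightarrow> u x"
      unfolding G_def using lipschitz_minorant_LIMSEQ[OF False nonneg lsc x] by simp
    then have "(\<lambda>n. G n x) \<longlonglongrightarrow> u x" by (rule LIMSEQ_imp_Suc)
    then show "(\<lambda>n. G (Suc n) x - G n x) sums u x"
      using telescope_sums[of "\<lambda>n. G n x"] by (simp add: G_def)
  qed
qed (auto intro: that[of "\<lambda>n x. 0"])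

lemma lsc_on_diff_sums_continuous:
  assumes "lsc_on K u" "lsc_on K v" "\<And>x. x \<in> K \<Longrightarrow> 0 \<le> u x" "\<And>x. x \<in> K \<Longrightarrow> 0 \<le> v x"
  obtains \<psi> where "\<And>n. continuous_on K (\<psi> n)" "\<And>x. x \<in> K \<Longrightarrow> (\<lambda>n. \<psi> n x) sums (u x - v x)"
    "\<And>x. x \<in> K \<Longrightarrow> summable (\<lambda>n. \<bar>\<psi> n x\<bar>)" "\<And>x. x \<in> K \<Longrightarrow> (\<Sum>n. \<bar>\<psi> n x\<bar>) \<le> u x + v x"
proof -
  obtain p where p: "\<And>n. continuous_on K (p n)" "\<And>n x. x \<in> K \<Longrightarrow> 0 \<le> p n x"
    "\<And>x. x \<in> K \<Longrightarrow> (\<lambda>n. p n x) sums u x"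
    using lsc_on_sums_continuous[OF assms(1,3)] by blast
  obtain q where q: "\<And>n. continuous_on K (q n)" "\<And>n x. x \<in> K \<Longrightarrow> 0 \<le> q n x"
    "\<And>x. x \<in> K \<Longrightarrow> (\<lambda>n. q n x) sums v x"
    using lsc_on_sums_continuous[OF assms(2,4)] by blast
  show ?thesis
  proof
    fix x assume x: "x \<in> K"
    have bound: "\<bar>p n x - q n x\<bar> \<le> p n x + q n x" for n
      using p(2)[OF x] q(2)[OF x] by (simp add: abs_le_iff)
    have sums: "(\<lambda>n. p n x + q n x) sums (u x + v x)"
      using p(3)[OF x] q(3)[OF x] by (rule sums_add)
    show summable_abs: "summable (\<lambda>n. \<bar>p n x - q n x\<bar>)"
      using bound by (intro summable_comparison_test[OF _ sums_summable[OF sums]]) auto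
    show "(\<Sum>n. \<bar>p n x - q n x\<bar>) \<le> u x + v x"
      using suminf_le[OF bound summable_abs sums_summable[OF sums]] sums_unique[OF sums] by simp
    show "(\<lambda>n. p n x - q n x) sums (u x - v x)"
      using p(3)[OF x] q(3)[OF x] by (rule sums_diff)
  qed (use p q in \<open>auto intro: continuous_on_diff\<close>)
qed

lemma suminf_ennreal_norm_le:
  assumes "summable c" and "\<And>j. norm (\<phi> j) \<le> c j"
  shows "(\<Sum>j. ennreal (norm (\<phi> j))) \<le> ennreal (\<Sum>j. c j)"
proof -
  have "(\<Sum>j. ennreal (norm (\<phi> j))) \<le> (\<Sum>j. ennreal (c j))"
    using assms(2) by (intro suminf_le summableI ennreal_leI) auto
  also have "\<dots> = ennreal (\<Sum>j. c j)"
    using assms by (intro suminf_ennreal2) (auto intro: order_trans[OF norm_ge_zero])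
  finally show ?thesis .
qed

lemma compact_countable_local_base:
  fixes K :: "'a::metric_space set"
  assumes "compact K"
  obtains \<B> where "countable \<B>" "\<And>B. B \<in> \<B> \<Longrightarrow> open B"
    "\<And>x V. x \<in> K \<Longrightarrow> open V \<Longrightarrow> x \<in> V \<Longrightarrow> \<exists>B\<in>\<B>. x \<in> B \<and> B \<subseteq> V"
proof -
  have "\<exists>C. finite C \<and> C \<subseteq> K \<and> K \<subseteq> (\<Union>c\<in>C. ball c (1 / Suc n))" for n
    using seq_compact_imp_totally_bounded[OF compact_imp_seq_compact[OF assms]] by simp
  then obtain C where C: "\<And>n. finite (C n)" "\<And>n. K \<subseteq> (\<Union>c\<in>C n. ball c (1 / Suc n))"
    by metis
  show ?thesis
  proof
    show "countable (\<Union>n. (\<lambda>c. ball c (1 / Suc n)) ` C n)"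
      by (intro countable_UN[OF countableI_type] countable_image countable_finite C(1))
  next
    fix x V assume x: "x \<in> K" and V: "open V" "x \<in> V"
    then obtain e where e: "e > 0" "ball x e \<subseteq> V" using open_contains_ball by blast
    then obtain n where n: "1 / Suc n < e / 2" using nat_approx_posE[of "e / 2"] by auto
    then obtain c where c: "c \<in> C n" "dist c x < 1 / Suc n" using C(2) x by force
    have "ball c (1 / Suc n) \<subseteq> ball x e"
    proof
      fix y assume "y \<in> ball c (1 / Suc n)"
      then show "y \<in> ball x e"
        using c(2) n dist_triangle[of x y c] dist_commute[of x c] unfolding mem_ball by linarith
    qed
    then show "\<exists>B\<in>(\<Union>n. (\<lambda>c. ball c (1 / Suc n)) ` C n). x \<in> B \<and> B \<subseteq> V"
      using c e(2) by (auto simp: dist_commute)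
  qed auto
qed

lemma usc_separating_witness:
  fixes g h :: "'a::metric_space \<Rightarrow> ennreal"
  assumes base: "\<And>x V. x \<in> K \<Longrightarrow> open V \<Longrightarrow> x \<in> V \<Longrightarrow> \<exists>B\<in>\<B>. x \<in> B \<and> B \<subseteq> V"
    and usc: "\<And>t. g x < t \<Longrightarrow> \<exists>V. open V \<and> x \<in> V \<and> (\<forall>y\<in>V. g y < t)"
    and "x \<in> K" "g x < h x"
  shows "\<exists>r::rat. \<exists>B\<in>\<B>. (\<forall>y\<in>B. g y < ennreal (real_of_rat r)) \<and> (\<exists>z\<in>B \<inter> K. ennreal (real_of_rat r) < h z)"
proof -
  obtain r where r: "g x < real_of_rat r" "real_of_rat r < h x"
    using ennreal_rat_dense[OF assms(4)] by blast
  obtain V where "open V" "x \<in> V" "\<forall>y\<in>V. g y < real_of_rat r" using usc[OF r(1)] by blast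
  moreover obtain B where "B \<in> \<B>" "x \<in> B" "B \<subseteq> V" using base[OF assms(3) \<open>open V\<close> \<open>x \<in> V\<close>] by blast
  ultimately show ?thesis using r(2) assms(3) by blast
qed

text \<open>Otherwise each countable ordinal \<open>a\<close> has a witness: a rational \<open>r\<close> and a basic open set \<open>B\<close>
  with \<open>F a < r\<close> on \<open>B\<close> but \<open>F (a + 1) > r\<close> somewhere on \<open>B \<inter> K\<close>.  By monotonicity distinct
  ordinals have distinct witnesses, which injects \<open>Field omega1\<close> into a countable set.\<close>
lemma omega1_chain_stabilizes:
  fixes F :: "nat set \<Rightarrow> 'a::metric_space \<Rightarrow> ennreal"
  assumes K: "compact K"
    and mono: "\<And>a b x. (a, b) \<in> omega1 \<Longrightarrow> x \<in> K \<Longrightarrow> F a x \<le> F b x"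
    and usc: "\<And>a x t. x \<in> K \<Longrightarrow> F a x < t \<Longrightarrow> \<exists>V. open V \<and> x \<in> V \<and> (\<forall>y\<in>V. F a y < t)"
  shows "\<exists>\<alpha>\<in>Field omega1. \<exists>\<beta>. is_succ_ord \<alpha> \<beta> \<and> (\<forall>x\<in>K. F \<alpha> x = F \<beta> x)"
proof (rule ccontr)
  assume unstable: "\<not> ?thesis"
  obtain \<B> where \<B>: "countable \<B>" "\<And>x V. x \<in> K \<Longrightarrow> open V \<Longrightarrow> x \<in> V \<Longrightarrow> \<exists>B\<in>\<B>. x \<in> B \<and> B \<subseteq> V"
    using compact_countable_local_base[OF K] by metis
  obtain sc where sc: "\<And>a. a \<in> Field omega1 \<Longrightarrow> is_succ_ord a (sc a)"
    using is_succ_ord_exists by metis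
  define witness where "witness a w \<longleftrightarrow> snd w \<in> \<B>
      \<and> (\<forall>y\<in>snd w. F a y < ennreal (real_of_rat (fst w)))
      \<and> (\<exists>z\<in>snd w \<inter> K. ennreal (real_of_rat (fst w)) < F (sc a) z)" for a w
  have "\<exists>w. witness a w" if a: "a \<in> Field omega1" for a
  proof -
    obtain x where x: "x \<in> K" "F a x \<noteq> F (sc a) x" using unstable sc[OF a] a by blast
    moreover have "(a, sc a) \<in> omega1" using is_succ_ord_less[OF sc[OF a]] unfolding ord_less_iff ..
    ultimately have "F a x < F (sc a) x" using mono[of a "sc a" x] by (simp add: order_less_le)
    then obtain r B where "B \<in> \<B>" "\<forall>y\<in>B. F a y < ennreal (real_of_rat r)"
      "\<exists>z\<in>B \<inter> K. ennreal (real_of_rat r) < F (sc a) z"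
      using usc_separating_witness[OF \<B>(2) usc[OF x(1)] x(1)] by blast
    then show ?thesis unfolding witness_def by (intro exI[of _ "(r, B)"]) simp
  qed
  then obtain code where code: "\<And>a. a \<in> Field omega1 \<Longrightarrow> witness a (code a)" by metis
  have distinct: "code a \<noteq> code b" if ab: "(a, b) \<in> ord_less" "b \<in> Field omega1" for a b
  proof
    assume same: "code a = code b"
    have a: "a \<in> Field omega1" using ab(1) by (rule ord_less_Field)
    obtain z where z: "z \<in> snd (code a) \<inter> K" "ennreal (real_of_rat (fst (code a))) < F (sc a) z"
      using code[OF a] unfolding witness_def by blast
    have "F (sc a) z \<le> F b z" using mono[OF is_succ_ord_least[OF sc[OF a] ab(1)]] z(1) by blast
    moreover have "F b z < ennreal (real_of_rat (fst (code a)))"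
      using code[OF ab(2)] z(1) unfolding witness_def same by blast
    ultimately show False using z(2) by simp
  qed
  have "inj_on code (Field omega1)" using distinct by (rule inj_on_Field_omega1I)
  moreover have "code ` Field omega1 \<subseteq> UNIV \<times> \<B>"
    using code unfolding witness_def by (simp add: image_subset_iff mem_Times_iff)
  then have "countable (code ` Field omega1)"
    using countable_SIGMA[OF countableI_type \<B>(1)] by (rule countable_subset)
  ultimately show False using uncountable_Field_omega1 countable_image_inj_on by blast
qed

lemma abs_Re_diff_le: "\<bar>Re z - Re w\<bar> \<le> norm (z - w)"
  using abs_Re_le_cmod[of "z - w"] by simp

lemma abs_Im_diff_le: "\<bar>Im z - Im w\<bar> \<le> norm (z - w)"
  using abs_Im_le_cmod[of "z - w"] by simp

lemma in_D_of_component_series: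
  fixes \<psi>\<^sub>1 \<psi>\<^sub>2 :: "nat \<Rightarrow> 'a::metric_space \<Rightarrow> real"
  assumes cont: "\<And>n. continuous_on K (\<psi>\<^sub>1 n)" "\<And>n. continuous_on K (\<psi>\<^sub>2 n)"
    and sums: "\<And>x. x \<in> K \<Longrightarrow> (\<lambda>n. \<psi>\<^sub>1 n x) sums Re (f x)" "\<And>x. x \<in> K \<Longrightarrow> (\<lambda>n. \<psi>\<^sub>2 n x) sums Im (f x)"
    and summable: "\<And>x. x \<in> K \<Longrightarrow> summable (\<lambda>n. \<bar>\<psi>\<^sub>1 n x\<bar>)" "\<And>x. x \<in> K \<Longrightarrow> summable (\<lambda>n. \<bar>\<psi>\<^sub>2 n x\<bar>)"
    and le: "\<And>x. x \<in> K \<Longrightarrow> (\<Sum>n. \<bar>\<psi>\<^sub>1 n x\<bar>) + (\<Sum>n. \<bar>\<psi>\<^sub>2 n x\<bar>) \<le> B x"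
    and finite: "(SUP x\<in>K. ennreal (B x)) < \<infinity>"
  shows "in_D K f \<and> D_norm K f \<le> (SUP x\<in>K. ennreal (B x))"
proof -
  define \<phi> where "\<phi> n x = Complex (\<psi>\<^sub>1 n x) (\<psi>\<^sub>2 n x)" for n x
  have bound: "(\<Sum>n. ennreal (norm (\<phi> n x))) \<le> ennreal (B x)" if x: "x \<in> K" for x
  proof -
    have "norm (\<phi> n x) \<le> \<bar>\<psi>\<^sub>1 n x\<bar> + \<bar>\<psi>\<^sub>2 n x\<bar>" for n
      using cmod_le[of "\<phi> n x"] by (simp add: \<phi>_def)
    then have "(\<Sum>n. ennreal (norm (\<phi> n x))) \<le> ennreal (\<Sum>n. \<bar>\<psi>\<^sub>1 n x\<bar> + \<bar>\<psi>\<^sub>2 n x\<bar>)"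
      using summable[OF x] by (intro suminf_ennreal_norm_le summable_add)
    also have "\<dots> \<le> ennreal (B x)"
      using le[OF x] suminf_add[OF summable[OF x]] by (intro ennreal_leI) simp
    finally show ?thesis .
  qed
  have SUP_le: "(SUP x\<in>K. \<Sum>n. ennreal (norm (\<phi> n x))) \<le> (SUP x\<in>K. ennreal (B x))"
    by (rule SUP_subset_mono[OF order_refl bound])
  have "D_rep K f \<phi>"
    unfolding D_rep_def
  proof (intro conjI allI ballI)
    show "continuous_on K (\<phi> n)" for n
      unfolding \<phi>_def using cont by (intro continuous_intros)
    show "(\<lambda>n. \<phi> n x) sums f x" if "x \<in> K" for x
      unfolding \<phi>_def sums_complex_iff using sums that by simp
    show "(SUP x\<in>K. \<Sum>n. ennreal (norm (\<phi> n x))) < \<infinity>"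
      using SUP_le finite by (rule le_less_trans)
  qed
  then have "D_norm K f \<le> (SUP x\<in>K. \<Sum>n. ennreal (norm (\<phi> n x)))"
    unfolding D_norm_def by (intro INF_lower) simp
  with \<open>D_rep K f \<phi>\<close> SUP_le show ?thesis unfolding in_D_def by auto
qed

locale stable_osc =
  fixes K :: "'a::metric_space set" and f :: "'a \<Rightarrow> complex" and \<alpha> \<beta> :: "nat set"
  assumes succ: "is_succ_ord \<alpha> \<beta>"
    and stable: "\<forall>x\<in>K. osc K f \<alpha> x = osc K f \<beta> x"
    and bounded: "(SUP x\<in>K. ennreal (norm (f x)) + osc K f \<alpha> x) < \<infinity>"
begin

definition lam :: ennreal where
  "lam = (SUP x\<in>K. ennreal (norm (f x)) + osc K f \<alpha> x)"

definition lam_real :: real where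
  "lam_real = enn2real lam"

definition osc_real :: "'a \<Rightarrow> real" where
  "osc_real x = enn2real (osc K f \<alpha> x)"

lemma lam_eq: "lam = ennreal lam_real"
  using bounded unfolding lam_real_def lam_def by (cases "SUP x\<in>K. ennreal (norm (f x)) + osc K f \<alpha> x") auto

lemma osc_eq: "x \<in> K \<Longrightarrow> osc K f \<alpha> x = ennreal (osc_real x)"
proof -
  assume x: "x \<in> K"
  have "osc K f \<alpha> x \<le> lam"
    unfolding lam_def using x by (intro SUP_upper2[OF x]) (simp add: add_increasing)
  then have "osc K f \<alpha> x < \<infinity>" using bounded unfolding lam_def by (rule le_less_trans)
  then show ?thesis unfolding osc_real_def by (cases "osc K f \<alpha> x") auto
qed

lemma lam_real_nonneg: "0 \<le> lam_real"
  unfolding lam_real_def by simp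

lemma osc_real_nonneg: "0 \<le> osc_real x"
  unfolding osc_real_def by simp

lemma norm_plus_osc_le: "x \<in> K \<Longrightarrow> norm (f x) + osc_real x \<le> lam_real"
proof -
  assume x: "x \<in> K"
  have "ennreal (norm (f x) + osc_real x) = ennreal (norm (f x)) + osc K f \<alpha> x"
    using osc_eq[OF x] osc_real_nonneg by (simp add: ennreal_plus)
  also have "\<dots> \<le> ennreal lam_real" unfolding lam_eq[symmetric] lam_def using x by (rule SUP_upper)
  finally show ?thesis using ennreal_le_iff[OF lam_real_nonneg] by blast
qed

text \<open>This is where stability enters: \<open>osc K f \<beta>\<close> is the upper envelope of
  \<open>y \<mapsto> norm (f y - f x) + osc K f \<alpha> y\<close>, and it equals \<open>osc K f \<alpha>\<close>.\<close>
lemma increment_plus_osc_less: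
  assumes x: "x \<in> K" and e: "e > 0"
  shows "\<exists>d>0. \<forall>y\<in>K. dist y x < d \<longrightarrow> norm (f y - f x) + osc_real y < osc_real x + e"
proof -
  let ?h = "\<lambda>y. ennreal (norm (f y - f x)) + osc K f \<alpha> y"
  have "lsup K ?h x \<le> osc K f \<beta> x"
    unfolding osc_succ[OF succ] by (rule lsup_upper[OF x])
  also have "\<dots> = ennreal (osc_real x)" using stable osc_eq[OF x] x by simp
  also have "\<dots> < ennreal (osc_real x + e)" using e osc_real_nonneg by (simp add: ennreal_lessI)
  finally obtain V where V: "open V" "x \<in> V" "\<forall>y\<in>V \<inter> K. ?h y < ennreal (osc_real x + e)"
    by (rule lsup_less_imp_open)
  obtain d where d: "d > 0" "ball x d \<subseteq> V" using V(1,2) open_contains_ball by blast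
  have "norm (f y - f x) + osc_real y < osc_real x + e" if y: "y \<in> K" "dist y x < d" for y
  proof -
    have "y \<in> V \<inter> K" using d(2) y by (auto simp: dist_commute)
    then have "?h y < ennreal (osc_real x + e)" using V(3) by blast
    then have "ennreal (norm (f y - f x) + osc_real y) < ennreal (osc_real x + e)"
      using osc_eq[OF y(1)] osc_real_nonneg by (simp add: ennreal_plus)
    then show ?thesis using ennreal_less_iff[of "norm (f y - f x) + osc_real y"] osc_real_nonneg[of y] by simp
  qed
  then show ?thesis using d(1) by blast
qed

lemma lsc_on_gap:
  assumes "\<And>x y. x \<in> K \<Longrightarrow> y \<in> K \<Longrightarrow> \<bar>g y - g x\<bar> \<le> norm (f y - f x)"
  shows "lsc_on K (\<lambda>x. (lam_real - osc_real x + g x) / 2)"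
proof (rule lsc_onI)
  fix x and e :: real assume x: "x \<in> K" and e: "e > 0"
  obtain d where d: "d > 0" "\<forall>y\<in>K. dist y x < d \<longrightarrow> norm (f y - f x) + osc_real y < osc_real x + e"
    using increment_plus_osc_less[OF x e] by blast
  have "(lam_real - osc_real x + g x) / 2 - e < (lam_real - osc_real y + g y) / 2"
    if "y \<in> K" "dist y x < d" for y
  proof -
    have "norm (f y - f x) + osc_real y < osc_real x + e" using d(2) that by blast
    moreover have "g x - g y \<le> norm (f y - f x)" using assms[OF x that(1)] by linarith
    ultimately have "lam_real - osc_real x + g x - 2 * e < lam_real - osc_real y + g y" using e by linarith
    then show ?thesis by (simp add: field_simps)
  qed
  then show "\<exists>d>0. \<forall>y\<in>K. dist y x < d \<longrightarrow> (lam_real - osc_real x + g x) / 2 - e < (lam_real - osc_real y + g y) / 2"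
    using d(1) by blast
qed

lemma gap_nonneg:
  assumes "\<And>x. x \<in> K \<Longrightarrow> \<bar>g x\<bar> \<le> norm (f x)" and "x \<in> K"
  shows "0 \<le> (lam_real - osc_real x + g x) / 2"
proof -
  have "- g x \<le> norm (f x)" using assms by (simp add: abs_le_iff)
  then have "0 \<le> lam_real - osc_real x + g x" using norm_plus_osc_le[OF assms(2)] by linarith
  then show ?thesis by simp
qed

lemma component_series:
  assumes bound: "\<And>x. x \<in> K \<Longrightarrow> \<bar>g x\<bar> \<le> norm (f x)"
    and lipschitz: "\<And>x y. x \<in> K \<Longrightarrow> y \<in> K \<Longrightarrow> \<bar>g y - g x\<bar> \<le> norm (f y - f x)"
  obtains \<psi> where "\<And>n. continuous_on K (\<psi> n)" "\<And>x. x \<in> K \<Longrightarrow> (\<lambda>n. \<psi> n x) sums g x"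
    "\<And>x. x \<in> K \<Longrightarrow> summable (\<lambda>n. \<bar>\<psi> n x\<bar>)" "\<And>x. x \<in> K \<Longrightarrow> (\<Sum>n. \<bar>\<psi> n x\<bar>) \<le> lam_real - osc_real x"
proof -
  have lipschitz': "\<bar>- g y - - g x\<bar> \<le> norm (f y - f x)" if "x \<in> K" "y \<in> K" for x y
    using lipschitz[OF that] by simp
  have bound': "\<bar>- g x\<bar> \<le> norm (f x)" if "x \<in> K" for x
    using bound[OF that] by simp
  have lsc: "lsc_on K (\<lambda>x. (lam_real - osc_real x + g x) / 2)"
    "lsc_on K (\<lambda>x. (lam_real - osc_real x + - g x) / 2)"
    by (rule lsc_on_gap, erule (1) lipschitz, rule lsc_on_gap, erule (1) lipschitz')
  have nonneg: "\<And>x. x \<in> K \<Longrightarrow> 0 \<le> (lam_real - osc_real x + g x) / 2"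
    "\<And>x. x \<in> K \<Longrightarrow> 0 \<le> (lam_real - osc_real x + - g x) / 2"
    using gap_nonneg[OF bound] gap_nonneg[OF bound'] by simp_all
  obtain \<psi> where \<psi>: "\<And>n. continuous_on K (\<psi> n)"
    "\<And>x. x \<in> K \<Longrightarrow> (\<lambda>n. \<psi> n x) sums ((lam_real - osc_real x + g x) / 2 - (lam_real - osc_real x + - g x) / 2)"
    "\<And>x. x \<in> K \<Longrightarrow> summable (\<lambda>n. \<bar>\<psi> n x\<bar>)"
    "\<And>x. x \<in> K \<Longrightarrow> (\<Sum>n. \<bar>\<psi> n x\<bar>) \<le> (lam_real - osc_real x + g x) / 2 + (lam_real - osc_real x + - g x) / 2"
    using lsc_on_diff_sums_continuous[OF lsc nonneg] by blast
  have "(lam_real - osc_real x + g x) / 2 - (lam_real - osc_real x + - g x) / 2 = g x"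
    and "(lam_real - osc_real x + g x) / 2 + (lam_real - osc_real x + - g x) / 2 = lam_real - osc_real x"
    for x by (simp_all add: field_simps)
  with \<psi> show ?thesis by (intro that[of \<psi>]) simp_all
qed

lemma in_D: "in_D K f"
proof -
  obtain \<psi>\<^sub>1 where \<psi>\<^sub>1: "\<And>n. continuous_on K (\<psi>\<^sub>1 n)" "\<And>x. x \<in> K \<Longrightarrow> (\<lambda>n. \<psi>\<^sub>1 n x) sums Re (f x)"
    "\<And>x. x \<in> K \<Longrightarrow> summable (\<lambda>n. \<bar>\<psi>\<^sub>1 n x\<bar>)" "\<And>x. x \<in> K \<Longrightarrow> (\<Sum>n. \<bar>\<psi>\<^sub>1 n x\<bar>) \<le> lam_real - osc_real x"
    using component_series[OF abs_Re_le_cmod abs_Re_diff_le] by blast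
  obtain \<psi>\<^sub>2 where \<psi>\<^sub>2: "\<And>n. continuous_on K (\<psi>\<^sub>2 n)" "\<And>x. x \<in> K \<Longrightarrow> (\<lambda>n. \<psi>\<^sub>2 n x) sums Im (f x)"
    "\<And>x. x \<in> K \<Longrightarrow> summable (\<lambda>n. \<bar>\<psi>\<^sub>2 n x\<bar>)" "\<And>x. x \<in> K \<Longrightarrow> (\<Sum>n. \<bar>\<psi>\<^sub>2 n x\<bar>) \<le> lam_real - osc_real x"
    using component_series[OF abs_Im_le_cmod abs_Im_diff_le] by blast
  have bound: "(\<Sum>n. \<bar>\<psi>\<^sub>1 n x\<bar>) + (\<Sum>n. \<bar>\<psi>\<^sub>2 n x\<bar>) \<le> 2 * lam_real" if "x \<in> K" for x
    using \<psi>\<^sub>1(4)[OF that] \<psi>\<^sub>2(4)[OF that] osc_real_nonneg[of x] by linarith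
  have finite: "(SUP x\<in>K. ennreal (2 * lam_real)) < \<infinity>"
    using SUP_least[of K "\<lambda>_. ennreal (2 * lam_real)" "ennreal (2 * lam_real)"] by (simp add: le_less_trans)
  show ?thesis
    using in_D_of_component_series[where B = "\<lambda>_. 2 * lam_real", OF \<psi>\<^sub>1(1) \<psi>\<^sub>2(1) \<psi>\<^sub>1(2) \<psi>\<^sub>2(2)
        \<psi>\<^sub>1(3) \<psi>\<^sub>2(3) bound finite] by blast
qed

definition u :: "'a \<Rightarrow> real" where
  "u x = (lam_real - osc_real x + Re (f x)) / 2"

definition v :: "'a \<Rightarrow> real" where
  "v x = (lam_real - osc_real x - Re (f x)) / 2"

lemma abs_u_plus_v:
  assumes "x \<in> K"
  shows "\<bar>u x + v x\<bar> = lam_real - osc_real x"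
proof -
  have "0 \<le> lam_real - osc_real x" using norm_plus_osc_le[OF assms] norm_ge_zero[of "f x"] by linarith
  moreover have "u x + v x = lam_real - osc_real x" unfolding u_def v_def by (simp add: field_simps)
  ultimately show ?thesis by simp
qed

lemma u_v_nonneg: "x \<in> K \<Longrightarrow> 0 \<le> u x \<and> 0 \<le> v x"
  using gap_nonneg[OF abs_Re_le_cmod] gap_nonneg[of "\<lambda>x. - Re (f x)"] abs_Re_le_cmod
  unfolding u_def v_def by simp

lemma lsc_on_u: "lsc_on K u"
  using lsc_on_gap[OF abs_Re_diff_le] unfolding u_def[abs_def] .

lemma lsc_on_v: "lsc_on K v"
proof -
  have "\<bar>- Re (f y) - - Re (f x)\<bar> \<le> norm (f y - f x)" for x y
    using abs_Re_diff_le[of "f y" "f x"] by (simp add: abs_minus_commute[of "Re (f x)"])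
  then show ?thesis using lsc_on_gap[of "\<lambda>x. - Re (f x)"] unfolding v_def[abs_def] by simp
qed

lemma SUP_u_plus_v_le: "(SUP x\<in>K. ennreal \<bar>u x + v x\<bar>) \<le> lam"
  unfolding lam_eq using abs_u_plus_v osc_real_nonneg by (intro SUP_least ennreal_leI) auto

context
  assumes real: "\<forall>x\<in>K. Im (f x) = 0"
begin

lemma f_eq_u_minus_v: "x \<in> K \<Longrightarrow> f x = complex_of_real (u x - v x)"
  using real unfolding u_def v_def by (simp add: complex_eq_iff field_simps)

lemma D_norm_le_SUP_u_plus_v: "D_norm K f \<le> (SUP x\<in>K. ennreal \<bar>u x + v x\<bar>)"
proof -
  obtain \<psi> where \<psi>: "\<And>n. continuous_on K (\<psi> n)" "\<And>x. x \<in> K \<Longrightarrow> (\<lambda>n. \<psi> n x) sums Re (f x)"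
    "\<And>x. x \<in> K \<Longrightarrow> summable (\<lambda>n. \<bar>\<psi> n x\<bar>)" "\<And>x. x \<in> K \<Longrightarrow> (\<Sum>n. \<bar>\<psi> n x\<bar>) \<le> lam_real - osc_real x"
    using component_series[OF abs_Re_le_cmod abs_Re_diff_le] by blast
  have "(\<Sum>n. \<bar>\<psi> n x\<bar>) + (\<Sum>n. \<bar>(0::real)\<bar>) \<le> \<bar>u x + v x\<bar>" if "x \<in> K" for x
    using \<psi>(4)[OF that] abs_u_plus_v[OF that] by simp
  moreover have "(SUP x\<in>K. ennreal \<bar>u x + v x\<bar>) < \<infinity>"
    using SUP_u_plus_v_le bounded unfolding lam_def by (rule le_less_trans)
  moreover have "(\<lambda>n. 0) sums Im (f x)" if "x \<in> K" for x
    using real that by simp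
  ultimately show ?thesis
    using in_D_of_component_series[where \<psi>\<^sub>2 = "\<lambda>n x. 0", OF \<psi>(1) _ \<psi>(2)] \<psi>(3) by auto
qed

lemma real_decomposition:
  "let lam = (SUP x\<in>K. ennreal (norm (f x)) + osc K f \<alpha> x);
       u = (\<lambda>x. (enn2real lam - enn2real (osc K f \<alpha> x) + Re (f x)) / 2);
       v = (\<lambda>x. (enn2real lam - enn2real (osc K f \<alpha> x) - Re (f x)) / 2)
   in D_norm K f = lam
      \<and> (\<forall>x\<in>K. 0 \<le> u x \<and> 0 \<le> v x)
      \<and> lsc_on K u \<and> lsc_on K v
      \<and> (\<forall>x\<in>K. f x = complex_of_real (u x - v x))
      \<and> D_norm K f = (SUP x\<in>K. ennreal \<bar>u x + v x\<bar>)"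
proof -
  have "lam \<le> D_norm K f"
    unfolding lam_def by (rule SUP_norm_plus_osc_le_D_norm)
  then have "D_norm K f = lam" "D_norm K f = (SUP x\<in>K. ennreal \<bar>u x + v x\<bar>)"
    using D_norm_le_SUP_u_plus_v SUP_u_plus_v_le by (auto intro: antisym order_trans)
  then show ?thesis
    using u_v_nonneg lsc_on_u lsc_on_v f_eq_u_minus_v
    unfolding Let_def lam_def[symmetric] lam_real_def[symmetric] osc_real_def[symmetric]
      u_def[symmetric] v_def[symmetric] by blast
qed

end

end

lemma osc_stabilizes:
  "compact K \<Longrightarrow> \<exists>\<alpha>\<in>Field omega1. \<exists>\<beta>. is_succ_ord \<alpha> \<beta> \<and> (\<forall>x\<in>K. osc K f \<alpha> x = osc K f \<beta> x)"
  by (rule omega1_chain_stabilizes) (blast intro: osc_mono osc_less_imp_open)+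

lemma stable_osc_if_in_D:
  assumes "in_D K f" "is_succ_ord \<alpha> \<beta>" "\<forall>x\<in>K. osc K f \<alpha> x = osc K f \<beta> x"
  shows "stable_osc K f \<alpha> \<beta>"
proof
  show "(SUP x\<in>K. ennreal (norm (f x)) + osc K f \<alpha> x) < \<infinity>"
    using SUP_norm_plus_osc_le_D_norm D_norm_finite[OF assms(1)] by (rule le_less_trans)
qed (use assms in auto)

lemma stable_osc_if_osc_bounded:
  assumes "\<forall>x\<in>K. norm (f x) \<le> B" "(SUP x\<in>K. osc K f \<alpha> x) < \<infinity>"
    and "is_succ_ord \<alpha> \<beta>" "\<forall>x\<in>K. osc K f \<alpha> x = osc K f \<beta> x"
  shows "stable_osc K f \<alpha> \<beta>"
proof
  have "(SUP x\<in>K. ennreal (norm (f x)) + osc K f \<alpha> x) \<le> ennreal B + (SUP x\<in>K. osc K f \<alpha> x)"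
    using assms(1) by (intro SUP_least add_mono ennreal_leI SUP_upper) auto
  also have "\<dots> < \<infinity>" using assms(2) by (simp add: less_top[symmetric])
  finally show "(SUP x\<in>K. ennreal (norm (f x)) + osc K f \<alpha> x) < \<infinity>" .
qed (use assms in auto)

theorem theorem3p1:
  fixes K :: "'a::metric_space set" and f :: "'a \<Rightarrow> complex"
  assumes "compact K"
    and "\<exists>B. \<forall>x\<in>K. norm (f x) \<le> B"
  shows "(in_D K f \<longleftrightarrow> (\<forall>\<alpha>\<in>Field omega1. (SUP x\<in>K. osc K f \<alpha> x) < \<infinity>))
    \<and> (in_D K f \<longrightarrow>
        (\<exists>\<alpha>\<in>Field omega1. \<exists>\<beta>. is_succ_ord \<alpha> \<beta> \<and> (\<forall>x\<in>K. osc K f \<alpha> x = osc K f \<beta> x) \<and>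
          ((\<forall>x\<in>K. Im (f x) = 0) \<longrightarrow>
            (let lam = (SUP x\<in>K. ennreal (norm (f x)) + osc K f \<alpha> x);
                 u = (\<lambda>x. (enn2real lam - enn2real (osc K f \<alpha> x) + Re (f x)) / 2);
                 v = (\<lambda>x. (enn2real lam - enn2real (osc K f \<alpha> x) - Re (f x)) / 2)
             in D_norm K f = lam
                \<and> (\<forall>x\<in>K. 0 \<le> u x \<and> 0 \<le> v x)
                \<and> lsc_on K u \<and> lsc_on K v
                \<and> (\<forall>x\<in>K. f x = complex_of_real (u x - v x))
                \<and> D_norm K f = (SUP x\<in>K. ennreal \<bar>u x + v x\<bar>)))))"
proof -
  obtain \<alpha> \<beta> where \<alpha>: "\<alpha> \<in> Field omega1"
    and \<beta>: "is_succ_ord \<alpha> \<beta>" "\<forall>x\<in>K. osc K f \<alpha> x = osc K f \<beta> x"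
    using osc_stabilizes[OF assms(1)] by blast
  obtain B where B: "\<forall>x\<in>K. norm (f x) \<le> B" using assms(2) by blast
  have "in_D K f \<longleftrightarrow> (\<forall>\<alpha>\<in>Field omega1. (SUP x\<in>K. osc K f \<alpha> x) < \<infinity>)"
    using in_D_imp_osc_bounded stable_osc.in_D[OF stable_osc_if_osc_bounded[OF B _ \<beta>]] \<alpha> by blast
  moreover have "stable_osc K f \<alpha> \<beta>" if "in_D K f"
    using stable_osc_if_in_D[OF that \<beta>] .
  ultimately show ?thesis
    using \<alpha> \<beta> stable_osc.real_decomposition[of K f \<alpha> \<beta>] by blast
qed

end
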